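(* Assume $\sigma<2\phi(0)$. Then there exists a unique $\delta^\ast\in(\delta_{\mathrm{th}},b)$ with $$\frac{\sigma}{\phi\left(\Phi^{-1}(q(\delta^\ast))\right)}\cdot\frac{e^b-e^{b-\delta^\ast}}{e^b-1}=1,$$ and $\delta^\ast$ is the unique maximizer of $G_\varphi(\delta)=\varphi(\delta)(e^\delta-1)$ over $[\delta_{\mathrm{th}},b)$. Consequently, if $\delta_{\mathrm{th}}<\delta_\beta<\delta^\ast$, then $\delta^\ast$ is the unique maximizer of the governance objective $G$ over $(0,b)$.
   Context: Parameters: $N>0$, $\sigma>0$, $b>0$, $\beta>0$. $\Phi$ and $\phi$ denote the standard normal cdf and pdf. For $\delta\in(0,b)$ let $q(\delta)=\frac{e^{b-\delta}-1}{e^b-1}\in(0,1)$ and $\varphi(\delta)=N\exp\!\left[\sigma\,\Phi^{-1}(q(\delta))-\delta-\frac{\sigma^2}{2}\right]$. Let $\delta_{\mathrm{th}}=b-\log\left(\frac{e^b+1}{2}\right)$. Let $\delta_\beta\in(0,b)$ be the unique point with $\varphi(\delta_\beta)=\beta N$ ($\varphi$ is strictly decreasing from $+\infty$ to $0$ on $(0,b)$). Let $F^\ast(\delta)=\min(\varphi(\delta),\beta N)$ and the governance objective $G(\delta)=F^\ast(\delta)(e^\delta-1)$. *)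

theory Defs
  imports "HOL-Probability.Probability"
begin

abbreviation phi_n :: "real \<Rightarrow> real" where
  "phi_n \<equiv> std_normal_density"

definition Phi_n :: "real \<Rightarrow> real" where
  "Phi_n x = (LBINT t:{..x}. std_normal_density t)"

definition Phi_inv :: "real \<Rightarrow> real" where
  "Phi_inv p = (THE y. Phi_n y = p)"

definition qfun :: "real \<Rightarrow> real \<Rightarrow> real" where
  "qfun b \<delta> = (exp (b - \<delta>) - 1) / (exp b - 1)"

definition varphi :: "real \<Rightarrow> real \<Rightarrow> real \<Rightarrow> real \<Rightarrow> real" where
  "varphi N \<sigma> b \<delta> = N * exp (\<sigma> * Phi_inv (qfun b \<delta>) - \<delta> - \<sigma>\<^sup>2 / 2)"

definition delta_th :: "real \<Rightarrow> real" where
  "delta_th b = b - ln ((exp b + 1) / 2)"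

definition Fstar :: "real \<Rightarrow> real \<Rightarrow> real \<Rightarrow> real \<Rightarrow> real \<Rightarrow> real" where
  "Fstar N \<sigma> b \<beta> \<delta> = min (varphi N \<sigma> b \<delta>) (\<beta> * N)"

definition Gobj :: "real \<Rightarrow> real \<Rightarrow> real \<Rightarrow> real \<Rightarrow> real \<Rightarrow> real" where
  "Gobj N \<sigma> b \<beta> \<delta> = Fstar N \<sigma> b \<beta> \<delta> * (exp \<delta> - 1)"

definition Gvarphi :: "real \<Rightarrow> real \<Rightarrow> real \<Rightarrow> real \<Rightarrow> real" where
  "Gvarphi N \<sigma> b \<delta> = varphi N \<sigma> b \<delta> * (exp \<delta> - 1)"

definition unique_maximizer_on :: "(real \<Rightarrow> real) \<Rightarrow> real set \<Rightarrow> real \<Rightarrow> bool" where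
  "unique_maximizer_on f S x \<longleftrightarrow> x \<in> S \<and> (\<forall>y\<in>S. y \<noteq> x \<longrightarrow> f y < f x)"

end

theory Submission
  imports Defs
begin

text \<open>The substitution \<open>u = Phi_inv (q \<delta>)\<close> maps \<open>[\<delta>_th, b)\<close> injectively
  into \<open>u \<le> 0\<close> and turns \<open>G_varphi\<close> into a positive multiple of
  \<open>f u = e^(\<sigma>u) (1 - \<Phi> u)\<close>. Here \<open>f' = e^(\<sigma>u) r\<close> with
  \<open>r u = \<sigma> (1 - \<Phi> u) - \<phi> u\<close>, and \<open>r' u = (u - \<sigma>) \<phi> u < 0\<close> for \<open>u < \<sigma>\<close>.
  As \<open>r\<close> is positive far to the left and \<open>r 0 = \<sigma>/2 - \<phi> 0 < 0\<close>, it has a unique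
  zero \<open>u\<^sup>* < 0\<close>, which is the unique maximiser of \<open>f\<close> on \<open>u \<le> \<sigma>\<close>; the
  first-order condition of the statement is \<open>r u = 0\<close> written in terms of \<open>\<delta>\<close>.
  For the capped objective \<open>G\<close>: the cap \<open>\<beta>N\<close> is inactive at \<open>\<delta>\<^sup>*\<close> because
  \<open>varphi\<close> decreases; left of \<open>\<delta>_\<beta>\<close>, \<open>G \<le> \<beta>N (e^\<delta> - 1) \<le> G_varphi \<delta>_\<beta>\<close>,
  and right of it \<open>G \<le> G_varphi\<close>.\<close>

section \<open>The standard normal distribution function\<close>

lemma std_normal_density_pos: "phi_n x > 0"
  by (simp add: normal_density_pos)

lemma std_normal_density_has_real_derivative:
  "(phi_n has_real_derivative (- x * phi_n x)) (at x)"
proof -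
  have "((\<lambda>x. exp (- x\<^sup>2 / 2)) has_real_derivative exp (- x\<^sup>2 / 2) * (- (2 * x) / 2)) (at x)"
    by (intro DERIV_fun_exp derivative_eq_intros) auto
  from DERIV_cmult[OF this, of "1 / sqrt (2 * pi)"] show ?thesis
    unfolding std_normal_density_def by (simp add: algebra_simps)
qed

lemma std_normal_density_tendsto_at_bot: "(phi_n \<longlongrightarrow> 0) at_bot"
proof -
  have sq: "filterlim (\<lambda>x::real. x\<^sup>2) at_top at_bot"
    by (rule filterlim_pow_at_bot_even) (auto simp: filterlim_ident)
  have "filterlim (\<lambda>x::real. 1/2 * x\<^sup>2) at_top at_bot"
    using filterlim_tendsto_pos_mult_at_top[OF tendsto_const _ sq, of "1/2"] by simp
  then have "filterlim (\<lambda>x::real. - x\<^sup>2 / 2) at_bot at_bot"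
    by (simp add: filterlim_uminus_at_bot)
  then have "((\<lambda>x::real. exp (- x\<^sup>2 / 2)) \<longlongrightarrow> 0) at_bot"
    by (rule filterlim_compose[OF exp_at_bot])
  from tendsto_mult_right_zero[OF this, of "1 / sqrt (2 * pi)"] show ?thesis
    by (simp add: std_normal_density_def[abs_def])
qed

lemma set_integrable_std_normal_density: "A \<in> sets borel \<Longrightarrow> set_integrable lborel A phi_n"
  unfolding set_integrable_def by (rule integrable_mult_indicator) auto

lemma Phi_n_split:
  assumes "a \<le> x"
  shows "Phi_n x = Phi_n a + (LBINT y=a..x. phi_n y)"
proof -
  have "{..x} = {..a} \<union> {a<..x}" using assms by auto
  hence "Phi_n x = (LBINT t:{..a} \<union> {a<..x}. phi_n t)" by (simp add: Phi_n_def)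
  also have "\<dots> = Phi_n a + (LBINT t:{a<..x}. phi_n t)"
    by (subst set_integral_Un) (auto simp: Phi_n_def intro!: set_integrable_std_normal_density)
  also have "(LBINT t:{a<..x}. phi_n t) = (LBINT y=a..x. phi_n y)"
    using assms by (simp add: interval_integral_Ioc)
  finally show ?thesis .
qed

lemma Phi_n_has_real_derivative: "(Phi_n has_real_derivative phi_n x) (at x)"
proof -
  have cont: "continuous_on S phi_n" for S
    unfolding std_normal_density_def by (intro continuous_intros) auto
  have "((\<lambda>u. LBINT y=(x-1)..u. phi_n y) has_vector_derivative phi_n x) (at x within {x-1..x+1})"
    by (rule interval_integral_FTC2) (auto intro: cont)
  hence "((\<lambda>u. LBINT y=(x-1)..u. phi_n y) has_real_derivative phi_n x) (at x within {x-1..x+1})"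
    by (simp only: has_real_derivative_iff_has_vector_derivative)
  hence "((\<lambda>u. Phi_n (x-1) + (LBINT y=(x-1)..u. phi_n y)) has_real_derivative phi_n x)
          (at x within {x-1..x+1})"
    using DERIV_add[OF DERIV_const[of "Phi_n (x-1)"]] by force
  hence "((\<lambda>u. Phi_n (x-1) + (LBINT y=(x-1)..u. phi_n y)) has_real_derivative phi_n x)
          (at x within {x-1<..<x+1})"
    by (rule DERIV_subset) auto
  moreover have "at x within {x-1<..<x+1} = at x"
    by (rule at_within_open) auto
  ultimately have "((\<lambda>u. Phi_n (x-1) + (LBINT y=(x-1)..u. phi_n y)) has_real_derivative phi_n x)
                    (at x)"
    by simp
  then show ?thesis
  proof (rule has_field_derivative_transform_within_open[of _ _ _ "{x-1<..<x+1}"])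
    show "Phi_n (x-1) + (LBINT y=(x-1)..u. phi_n y) = Phi_n u" if "u \<in> {x-1<..<x+1}" for u
      using that Phi_n_split[of "x-1" u] by simp
  qed auto
qed

lemma isCont_Phi_n: "isCont Phi_n x"
  using Phi_n_has_real_derivative DERIV_isCont by blast

lemma strict_mono_Phi_n: "strict_mono Phi_n"
proof (rule strict_monoI)
  show "Phi_n x < Phi_n y" if "x < y" for x y
    using that Phi_n_has_real_derivative std_normal_density_pos
    by (blast intro: DERIV_pos_imp_increasing)
qed

lemma Phi_inv_Phi_n: "Phi_inv (Phi_n u) = u"
  unfolding Phi_inv_def using strict_mono_eq[OF strict_mono_Phi_n] by auto

definition std_normal_distribution :: "real measure" where
  "std_normal_distribution = density lborel phi_n"

lemma real_distribution_std_normal: "real_distribution std_normal_distribution"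
  unfolding real_distribution_def real_distribution_axioms_def std_normal_distribution_def
  using prob_space_normal_density by auto

lemma measure_std_normal_distribution:
  assumes "A \<in> sets borel"
  shows "measure std_normal_distribution A = (LBINT t:A. phi_n t)"
proof -
  have "measure std_normal_distribution A = integral\<^sup>L std_normal_distribution (indicator A)"
    using assms by (simp add: std_normal_distribution_def)
  also have "\<dots> = integral\<^sup>L lborel (\<lambda>t. phi_n t *\<^sub>R indicator A t)"
    unfolding std_normal_distribution_def using assms by (subst integral_density) auto
  finally show ?thesis
    unfolding set_lebesgue_integral_def by (simp add: mult.commute)
qed

lemma Phi_n_eq_cdf: "Phi_n = cdf std_normal_distribution"
  by (auto simp: fun_eq_iff cdf_def Phi_n_def measure_std_normal_distribution)

lemma Phi_n_tendsto_at_bot: "(Phi_n \<longlongrightarrow> 0) at_bot"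
  unfolding Phi_n_eq_cdf
  by (rule finite_borel_measure.cdf_lim_at_bot
        [OF real_distribution.finite_borel_measure_M[OF real_distribution_std_normal]])

lemma Phi_n_tendsto_at_top: "(Phi_n \<longlongrightarrow> 1) at_top"
  unfolding Phi_n_eq_cdf by (rule real_distribution.cdf_lim_at_top_prob[OF real_distribution_std_normal])

lemma Phi_n_pos: "0 < Phi_n x"
proof -
  have "0 \<le> Phi_n (x - 1)"
    unfolding Phi_n_eq_cdf by (rule finite_borel_measure.cdf_nonneg
        [OF real_distribution.finite_borel_measure_M[OF real_distribution_std_normal]])
  also have "Phi_n (x - 1) < Phi_n x"
    using strict_monoD[OF strict_mono_Phi_n] by simp
  finally show ?thesis .
qed

lemma Phi_n_0: "Phi_n 0 = 1/2"
proof -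
  interpret real_distribution std_normal_distribution by (rule real_distribution_std_normal)
  have sym: "(\<lambda>t. phi_n (-t)) = phi_n" by (simp add: fun_eq_iff std_normal_density_def)
  have refl: "{x. -x \<in> {..(0::real)}} = {0..}" by auto
  have "Phi_n 0 = (LBINT t:{0..}. phi_n t)"
    unfolding Phi_n_def by (subst set_integral_reflect) (simp only: sym refl)
  also have "\<dots> = measure std_normal_distribution {0..}"
    by (simp add: measure_std_normal_distribution)
  also have "{0..} = {0} \<union> {(0::real)<..}" by auto
  also have "measure std_normal_distribution \<dots>
      = measure std_normal_distribution {0} + measure std_normal_distribution {0<..}"
    by (rule finite_measure_Union) auto
  also have "measure std_normal_distribution {0} = 0"
    using isCont_cdf[of 0] isCont_Phi_n[of 0] by (simp add: Phi_n_eq_cdf)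
  also have "{0<..} = space std_normal_distribution - {..(0::real)}"
    by (auto simp: std_normal_distribution_def)
  also have "measure std_normal_distribution \<dots> = 1 - measure std_normal_distribution {..0}"
    by (rule prob_compl) auto
  also have "measure std_normal_distribution {..0} = Phi_n 0"
    by (simp add: Phi_n_eq_cdf cdf_def)
  finally show ?thesis by simp
qed

lemma Phi_n_surj:
  assumes "0 < p" "p < 1"
  shows "\<exists>u. Phi_n u = p"
proof -
  obtain a where a: "Phi_n a < p"
    using eventually_happens'[OF _ order_tendstoD(2)[OF Phi_n_tendsto_at_bot assms(1)]] by auto
  obtain c where c: "p < Phi_n c"
    using eventually_happens'[OF _ order_tendstoD(1)[OF Phi_n_tendsto_at_top assms(2)]] by auto
  have "a \<le> c"
    using a c strict_mono_less_eq[OF strict_mono_Phi_n, of c a] by linarith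
  then show ?thesis
    using IVT[of Phi_n a p c] isCont_Phi_n a c by force
qed

lemma Phi_n_Phi_inv: "0 < p \<Longrightarrow> p < 1 \<Longrightarrow> Phi_n (Phi_inv p) = p"
  using Phi_n_surj Phi_inv_Phi_n by metis

lemma Phi_inv_less_iff:
  "0 < p \<Longrightarrow> p < 1 \<Longrightarrow> 0 < p' \<Longrightarrow> p' < 1 \<Longrightarrow> Phi_inv p < Phi_inv p' \<longleftrightarrow> p < p'"
  using strict_mono_less[OF strict_mono_Phi_n, of "Phi_inv p" "Phi_inv p'"] by (simp add: Phi_n_Phi_inv)

lemma Phi_inv_nonpos: "0 < p \<Longrightarrow> p \<le> 1/2 \<Longrightarrow> Phi_inv p \<le> 0"
  using Phi_inv_less_iff[of "1/2" p] Phi_inv_Phi_n[of 0] by (simp add: Phi_n_0 not_less)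

section \<open>The tilted normal tail\<close>

definition tail_balance :: "real \<Rightarrow> real \<Rightarrow> real" where
  "tail_balance s u = s * (1 - Phi_n u) - phi_n u"

definition tilted_tail :: "real \<Rightarrow> real \<Rightarrow> real" where
  "tilted_tail s u = exp (s * u) * (1 - Phi_n u)"

lemma tail_balance_has_real_derivative:
  "(tail_balance s has_real_derivative (u - s) * phi_n u) (at u)"
proof -
  have "((\<lambda>u. s * (1 - Phi_n u) - phi_n u) has_real_derivative s * (0 - phi_n u) - (- u * phi_n u))
          (at u)"
    by (intro DERIV_diff DERIV_cmult DERIV_const Phi_n_has_real_derivative
          std_normal_density_has_real_derivative)
  then show ?thesis
    unfolding tail_balance_def[abs_def] by (simp add: algebra_simps)
qed

lemma tilted_tail_has_real_derivative:
  "(tilted_tail s has_real_derivative exp (s * u) * tail_balance s u) (at u)"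
proof -
  have "((\<lambda>u. exp (s * u)) has_real_derivative exp (s * u) * (s * 1)) (at u)"
    by (intro DERIV_fun_exp DERIV_cmult DERIV_ident)
  from DERIV_mult[OF this DERIV_diff[OF DERIV_const[of 1] Phi_n_has_real_derivative]]
  show ?thesis
    unfolding tilted_tail_def[abs_def] tail_balance_def by (simp add: algebra_simps)
qed

lemma tail_balance_strict_antimono:
  assumes "a < c" "c \<le> s"
  shows "tail_balance s c < tail_balance s a"
proof (rule DERIV_neg_imp_decreasing_open[OF assms(1)])
  show "continuous_on {a..c} (tail_balance s)"
    using tail_balance_has_real_derivative
    by (meson DERIV_isCont continuous_at_imp_continuous_on)
  fix x assume "a < x" "x < c"
  then have "(x - s) * phi_n x < 0"
    using assms std_normal_density_pos[of x] by (simp add: mult_neg_pos)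
  then show "\<exists>y. DERIV (tail_balance s) x :> y \<and> y < 0"
    using tail_balance_has_real_derivative by blast
qed

lemma tail_balance_root_exists:
  assumes "0 < s" "s < 2 * phi_n 0"
  shows "\<exists>u<0. tail_balance s u = 0"
proof -
  obtain a where a: "phi_n a < s / 2" "a < 0"
    using eventually_happens'[OF _ eventually_conj
        [OF order_tendstoD(2)[OF std_normal_density_tendsto_at_bot, of "s / 2"]
            eventually_gt_at_bot[of 0]]] assms(1) by auto
  have "Phi_n a \<le> 1/2"
    using strict_mono_less_eq[OF strict_mono_Phi_n, of a 0] a by (simp add: Phi_n_0)
  then have "s * (1/2) \<le> s * (1 - Phi_n a)"
    using assms(1) by (intro mult_left_mono) auto
  then have pos: "tail_balance s a > 0"
    using a unfolding tail_balance_def by linarith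
  have neg: "tail_balance s 0 < 0"
    using assms(2) unfolding tail_balance_def Phi_n_0 by simp
  obtain u where "a \<le> u" "u \<le> 0" "tail_balance s u = 0"
    using IVT2[of "tail_balance s" 0 0 a] pos neg a DERIV_isCont[OF tail_balance_has_real_derivative]
    by force
  moreover have "u \<noteq> 0"
    using neg \<open>tail_balance s u = 0\<close> by auto
  ultimately show ?thesis
    by (auto simp: order.strict_iff_order)
qed

lemma tail_balance_sign:
  assumes "tail_balance s r = 0" "r \<le> s" "u \<le> s"
  shows "u < r \<Longrightarrow> tail_balance s u > 0" and "r < u \<Longrightarrow> tail_balance s u < 0"
  using assms tail_balance_strict_antimono[of u r s] tail_balance_strict_antimono[of r u s] by auto

lemma tail_balance_root_unique:
  assumes "tail_balance s r = 0" "tail_balance s u = 0" "r \<le> s" "u \<le> s"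
  shows "u = r"
  using tail_balance_sign[OF assms(1) assms(3) assms(4)] assms(2)
  by (cases u r rule: linorder_cases) auto

lemma tilted_tail_unique_maximizer:
  assumes "tail_balance s r = 0" "r \<le> s"
  shows "unique_maximizer_on (tilted_tail s) {..s} r"
proof -
  have cont: "continuous_on S (tilted_tail s)" for S
    using tilted_tail_has_real_derivative
    by (meson DERIV_isCont continuous_at_imp_continuous_on)
  have "tilted_tail s u < tilted_tail s r" if "u < r" for u
  proof (rule DERIV_pos_imp_increasing_open[OF that _ cont])
    fix x assume "u < x" "x < r"
    then have "exp (s * x) * tail_balance s x > 0"
      using tail_balance_sign(1)[OF assms(1) assms(2)] assms(2) by simp
    then show "\<exists>y. DERIV (tilted_tail s) x :> y \<and> y > 0"
      using tilted_tail_has_real_derivative by blast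
  qed
  moreover have "tilted_tail s u < tilted_tail s r" if "r < u" "u \<le> s" for u
  proof (rule DERIV_neg_imp_decreasing_open[OF that(1) _ cont])
    fix x assume "r < x" "x < u"
    then have "exp (s * x) * tail_balance s x < 0"
      using tail_balance_sign(2)[OF assms(1) assms(2)] that(2) by (simp add: mult_pos_neg)
    then show "\<exists>y. DERIV (tilted_tail s) x :> y \<and> y < 0"
      using tilted_tail_has_real_derivative by blast
  qed
  ultimately show ?thesis
    unfolding unique_maximizer_on_def using assms(2) by (auto simp: neq_iff)
qed

section \<open>The quantile level \<open>q\<close> and the objectives\<close>

lemma qfun_strict_antimono: "b > 0 \<Longrightarrow> d1 < d2 \<Longrightarrow> qfun b d2 < qfun b d1"
  unfolding qfun_def by (simp add: divide_strict_right_mono)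

lemma qfun_pos_iff: "b > 0 \<Longrightarrow> 0 < qfun b d \<longleftrightarrow> d < b"
  unfolding qfun_def by (simp add: zero_less_divide_iff)

lemma qfun_less_one_iff: "b > 0 \<Longrightarrow> qfun b d < 1 \<longleftrightarrow> 0 < d"
  unfolding qfun_def by simp

lemma qfun_less_half_iff:
  assumes "b > 0"
  shows "qfun b d < 1/2 \<longleftrightarrow> delta_th b < d"
proof -
  have "qfun b d < 1/2 \<longleftrightarrow> exp (b - d) < (exp b + 1) / 2"
    unfolding qfun_def using assms by (simp add: field_simps)
  also have "\<dots> \<longleftrightarrow> b - d < ln ((exp b + 1) / 2)"
    by (subst exp_less_cancel_iff[symmetric]) (simp add: add_pos_pos)
  finally show ?thesis
    unfolding delta_th_def by linarith
qed

lemma qfun_le_half_iff: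
  assumes "b > 0"
  shows "qfun b d \<le> 1/2 \<longleftrightarrow> delta_th b \<le> d"
proof -
  have "qfun b d \<le> 1/2 \<longleftrightarrow> exp (b - d) \<le> (exp b + 1) / 2"
    unfolding qfun_def using assms by (simp add: field_simps)
  also have "\<dots> \<longleftrightarrow> b - d \<le> ln ((exp b + 1) / 2)"
    by (subst exp_le_cancel_iff[symmetric]) (simp add: add_pos_pos)
  finally show ?thesis
    unfolding delta_th_def by linarith
qed

lemma delta_th_pos: "b > 0 \<Longrightarrow> delta_th b > 0"
  using qfun_less_one_iff[of b "delta_th b"] qfun_le_half_iff[of b "delta_th b"] by simp

lemma qfun_surj:
  assumes "b > 0" "0 < p" "p < 1"
  shows "\<exists>d\<in>{0<..<b}. qfun b d = p"
proof
  define d where "d = b - ln (1 + p * (exp b - 1))"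
  have "exp (b - d) = 1 + p * (exp b - 1)"
    unfolding d_def using assms by (simp add: add_pos_nonneg)
  then show q: "qfun b d = p"
    unfolding qfun_def using assms(1) by simp
  then show "d \<in> {0<..<b}"
    using assms qfun_pos_iff[of b d] qfun_less_one_iff[of b d] by simp
qed

lemma one_minus_qfun: "b > 0 \<Longrightarrow> (exp b - exp (b - d)) / (exp b - 1) = 1 - qfun b d"
  unfolding qfun_def by (simp add: field_simps)

lemma Phi_n_Phi_inv_qfun: "d \<in> {0<..<b} \<Longrightarrow> Phi_n (Phi_inv (qfun b d)) = qfun b d"
  using qfun_pos_iff[of b d] qfun_less_one_iff[of b d] by (simp add: Phi_n_Phi_inv)

lemma Phi_inv_qfun_strict_antimono:
  assumes "0 < d1" "d1 < d2" "d2 < b"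
  shows "Phi_inv (qfun b d2) < Phi_inv (qfun b d1)"
  using assms qfun_strict_antimono[of b d1 d2] Phi_inv_less_iff[of "qfun b d2" "qfun b d1"]
        qfun_pos_iff[of b] qfun_less_one_iff[of b]
  by simp

lemma inj_on_Phi_inv_qfun: "inj_on (\<lambda>d. Phi_inv (qfun b d)) {0<..<b}"
proof (rule inj_onI)
  fix d1 d2 assume "d1 \<in> {0<..<b}" "d2 \<in> {0<..<b}" "Phi_inv (qfun b d1) = Phi_inv (qfun b d2)"
  then show "d1 = d2"
    using Phi_inv_qfun_strict_antimono[of d1 d2 b] Phi_inv_qfun_strict_antimono[of d2 d1 b]
    by (cases d1 d2 rule: linorder_cases) auto
qed

lemma Phi_inv_qfun_nonpos:
  "b > 0 \<Longrightarrow> delta_th b \<le> d \<Longrightarrow> d < b \<Longrightarrow> Phi_inv (qfun b d) \<le> 0"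
  using qfun_pos_iff[of b d] qfun_le_half_iff[of b d] by (simp add: Phi_inv_nonpos)

lemma Gvarphi_eq_tilted_tail:
  assumes "d \<in> {0<..<b}"
  shows "Gvarphi N s b d
    = N * exp (- s\<^sup>2 / 2) * (1 - exp (- b)) * tilted_tail s (Phi_inv (qfun b d))"
proof -
  define u where "u = Phi_inv (qfun b d)"
  have b: "b > 0" using assms by simp
  have "(1 - exp (- b)) * (1 - qfun b d) = 1 - exp (- d)"
    using b unfolding qfun_def by (simp add: field_simps exp_diff exp_minus)
  moreover have "exp (s * u - d - s\<^sup>2 / 2) = exp (s * u) * exp (- s\<^sup>2 / 2) * exp (- d)"
    by (simp add: mult_exp_exp)
  moreover have "exp (- d) * (exp d - 1) = 1 - exp (- d)"
    by (simp add: exp_minus field_simps)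
  ultimately show ?thesis
    unfolding Gvarphi_def varphi_def tilted_tail_def u_def[symmetric]
      Phi_n_Phi_inv_qfun[OF assms, folded u_def]
    by (simp add: ac_simps)
qed

lemma first_order_condition_iff_tail_balance:
  assumes "d \<in> {0<..<b}"
  shows "s / phi_n (Phi_inv (qfun b d)) * ((exp b - exp (b - d)) / (exp b - 1)) = 1
    \<longleftrightarrow> tail_balance s (Phi_inv (qfun b d)) = 0"
  using assms std_normal_density_pos[of "Phi_inv (qfun b d)"]
  by (auto simp: one_minus_qfun Phi_n_Phi_inv_qfun tail_balance_def field_simps)

lemma varphi_strict_antimono:
  assumes "N > 0" "s > 0" "0 < d1" "d1 < d2" "d2 < b"
  shows "varphi N s b d2 < varphi N s b d1"
proof -
  have "s * Phi_inv (qfun b d2) < s * Phi_inv (qfun b d1)"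
    using assms Phi_inv_qfun_strict_antimono[of d1 d2 b] by simp
  then have "s * Phi_inv (qfun b d2) - d2 - s\<^sup>2 / 2 < s * Phi_inv (qfun b d1) - d1 - s\<^sup>2 / 2"
    using assms(4) by linarith
  then show ?thesis
    unfolding varphi_def using assms by simp
qed

lemma unique_maximizer_on_reparametrize:
  assumes "unique_maximizer_on f T (h x)" "inj_on h S" "h ` S \<subseteq> T" "x \<in> S" "c > 0"
    and "\<And>y. y \<in> S \<Longrightarrow> g y = c * f (h y)"
  shows "unique_maximizer_on g S x"
  using assms unfolding unique_maximizer_on_def inj_on_def by (auto simp: image_subset_iff)

lemma delta_star_exists:
  assumes "0 < s" "s < 2 * phi_n 0" "b > 0"
  shows "\<exists>d\<in>{delta_th b<..<b}. tail_balance s (Phi_inv (qfun b d)) = 0"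
proof -
  obtain r where r: "r < 0" "tail_balance s r = 0"
    using tail_balance_root_exists assms(1,2) by blast
  have "0 < Phi_n r" "Phi_n r < 1/2"
    using Phi_n_pos strict_monoD[OF strict_mono_Phi_n r(1)] by (simp_all add: Phi_n_0)
  then obtain d where d: "d \<in> {0<..<b}" "qfun b d = Phi_n r"
    using qfun_surj[OF assms(3)] by fastforce
  have "delta_th b < d"
    using \<open>Phi_n r < 1/2\<close> by (simp only: qfun_less_half_iff[OF assms(3), symmetric] d(2))
  moreover have "tail_balance s (Phi_inv (qfun b d)) = 0"
    using d(2) r(2) by (simp add: Phi_inv_Phi_n)
  ultimately show ?thesis
    using d(1) by auto
qed

lemma first_order_condition_unique:
  assumes "s > 0" "b > 0" "tail_balance s (Phi_inv (qfun b d)) = 0"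
    and "d \<in> {delta_th b<..<b}" "d' \<in> {delta_th b<..<b}"
  shows "s / phi_n (Phi_inv (qfun b d')) * ((exp b - exp (b - d')) / (exp b - 1)) = 1
    \<longleftrightarrow> d' = d"
proof -
  have in_domain: "e \<in> {0<..<b}" "Phi_inv (qfun b e) \<le> s" if "e \<in> {delta_th b<..<b}" for e
  proof -
    show "e \<in> {0<..<b}"
      using that delta_th_pos[OF assms(2)] by simp
    show "Phi_inv (qfun b e) \<le> s"
      using that Phi_inv_qfun_nonpos[OF assms(2), of e] assms(1) by simp
  qed
  have "s / phi_n (Phi_inv (qfun b d')) * ((exp b - exp (b - d')) / (exp b - 1)) = 1
      \<longleftrightarrow> tail_balance s (Phi_inv (qfun b d')) = 0"
    by (rule first_order_condition_iff_tail_balance[OF in_domain(1)[OF assms(5)]])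
  also have "\<dots> \<longleftrightarrow> Phi_inv (qfun b d') = Phi_inv (qfun b d)"
    using tail_balance_root_unique[OF assms(3) _ in_domain(2)[OF assms(4)] in_domain(2)[OF assms(5)]]
      assms(3) by auto
  also have "\<dots> \<longleftrightarrow> d' = d"
    using inj_onD[OF inj_on_Phi_inv_qfun _ in_domain(1)[OF assms(5)] in_domain(1)[OF assms(4)]]
    by blast
  finally show ?thesis .
qed

lemma Gvarphi_unique_maximizer:
  assumes "N > 0" "s > 0" "b > 0" "tail_balance s (Phi_inv (qfun b d)) = 0"
    and "d \<in> {delta_th b..<b}"
  shows "unique_maximizer_on (Gvarphi N s b) {delta_th b..<b} d"
proof -
  have S: "{delta_th b..<b} \<subseteq> {0<..<b}"
    using delta_th_pos[OF assms(3)] by auto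
  have u_le: "Phi_inv (qfun b e) \<le> s" if "e \<in> {delta_th b..<b}" for e
    using that Phi_inv_qfun_nonpos[OF assms(3), of e] assms(2) by auto
  have C: "N * exp (- s\<^sup>2 / 2) * (1 - exp (- b)) > 0"
    using assms(1,3) by simp
  show ?thesis
  proof (rule unique_maximizer_on_reparametrize
      [OF _ inj_on_subset[OF inj_on_Phi_inv_qfun S] _ assms(5) C])
    show "unique_maximizer_on (tilted_tail s) {..s} (Phi_inv (qfun b d))"
      by (rule tilted_tail_unique_maximizer[OF assms(4) u_le[OF assms(5)]])
    show "(\<lambda>e. Phi_inv (qfun b e)) ` {delta_th b..<b} \<subseteq> {..s}"
      using u_le by auto
    show "Gvarphi N s b e
        = N * exp (- s\<^sup>2 / 2) * (1 - exp (- b)) * tilted_tail s (Phi_inv (qfun b e))"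
      if "e \<in> {delta_th b..<b}" for e
      using Gvarphi_eq_tilted_tail that S by blast
  qed
qed

lemma Gobj_unique_maximizer:
  assumes "N > 0" "s > 0" "\<beta> > 0"
    and "\<delta>\<^sub>\<beta> \<in> {0<..<b}" "varphi N s b \<delta>\<^sub>\<beta> = \<beta> * N"
    and "delta_th b \<le> \<delta>\<^sub>\<beta>" "\<delta>\<^sub>\<beta> < d"
    and max: "unique_maximizer_on (Gvarphi N s b) {delta_th b..<b} d"
  shows "unique_maximizer_on (Gobj N s b \<beta>) {0<..<b} d"
proof -
  have d: "d \<in> {0<..<b}"
    using max assms(4,7) unfolding unique_maximizer_on_def by auto
  have "varphi N s b d \<le> \<beta> * N"
    using varphi_strict_antimono[of N s \<delta>\<^sub>\<beta> d b] assms d by simp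
  then have Gd: "Gobj N s b \<beta> d = Gvarphi N s b d"
    unfolding Gobj_def Gvarphi_def Fstar_def by simp
  have "Gobj N s b \<beta> y < Gobj N s b \<beta> d" if y: "y \<in> {0<..<b}" "y \<noteq> d" for y
  proof (cases "y \<le> \<delta>\<^sub>\<beta>")
    case True
    have "Gobj N s b \<beta> y \<le> \<beta> * N * (exp y - 1)"
      unfolding Gobj_def Fstar_def using y by (intro mult_right_mono) auto
    also have "\<dots> \<le> \<beta> * N * (exp \<delta>\<^sub>\<beta> - 1)"
      using True assms(1,3) by (intro mult_left_mono) auto
    also have "\<dots> = Gvarphi N s b \<delta>\<^sub>\<beta>"
      unfolding Gvarphi_def assms(5) ..
    also have "\<dots> < Gvarphi N s b d"
      using max assms(4,6,7) unfolding unique_maximizer_on_def by auto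
    finally show ?thesis
      unfolding Gd .
  next
    case False
    have "Gobj N s b \<beta> y \<le> Gvarphi N s b y"
      unfolding Gobj_def Gvarphi_def Fstar_def using y by (intro mult_right_mono) auto
    also have "\<dots> < Gvarphi N s b d"
      using max y False assms(6) unfolding unique_maximizer_on_def by auto
    finally show ?thesis
      unfolding Gd .
  qed
  with d show ?thesis
    unfolding unique_maximizer_on_def by blast
qed

theorem proposition3:
  fixes N \<sigma> b \<beta> \<delta>\<^sub>\<beta> :: real
  assumes "N > 0" and "\<sigma> > 0" and "b > 0" and "\<beta> > 0"
    and "\<delta>\<^sub>\<beta> \<in> {0<..<b}" and "varphi N \<sigma> b \<delta>\<^sub>\<beta> = \<beta> * N"
    and "\<sigma> < 2 * phi_n 0"
  shows "\<exists>d. d \<in> {delta_th b<..<b}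
      \<and> \<sigma> / phi_n (Phi_inv (qfun b d)) * ((exp b - exp (b - d)) / (exp b - 1)) = 1
      \<and> (\<forall>d'. d' \<in> {delta_th b<..<b}
            \<and> \<sigma> / phi_n (Phi_inv (qfun b d')) * ((exp b - exp (b - d')) / (exp b - 1)) = 1
            \<longrightarrow> d' = d)
      \<and> unique_maximizer_on (Gvarphi N \<sigma> b) {delta_th b..<b} d
      \<and> (delta_th b < \<delta>\<^sub>\<beta> \<and> \<delta>\<^sub>\<beta> < d \<longrightarrow> unique_maximizer_on (Gobj N \<sigma> b \<beta>) {0<..<b} d)"
proof -
  obtain d where d: "d \<in> {delta_th b<..<b}" "tail_balance \<sigma> (Phi_inv (qfun b d)) = 0"
    using delta_star_exists assms(2,3,7) by blast
  note foc = first_order_condition_unique[OF assms(2,3) d(2) d(1)]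
  have max: "unique_maximizer_on (Gvarphi N \<sigma> b) {delta_th b..<b} d"
    using Gvarphi_unique_maximizer[OF assms(1-3) d(2)] d(1) by simp
  show ?thesis
  proof (intro exI[of _ d] conjI allI impI)
    show "d \<in> {delta_th b<..<b}"
      by (rule d(1))
    show "\<sigma> / phi_n (Phi_inv (qfun b d)) * ((exp b - exp (b - d)) / (exp b - 1)) = 1"
      by (rule foc[OF d(1), THEN iffD2, OF refl])
    show "d' = d" if "d' \<in> {delta_th b<..<b}
        \<and> \<sigma> / phi_n (Phi_inv (qfun b d')) * ((exp b - exp (b - d')) / (exp b - 1)) = 1" for d'
      by (rule iffD1[OF foc[OF conjunct1[OF that]] conjunct2[OF that]])
    show "unique_maximizer_on (Gobj N \<sigma> b \<beta>) {0<..<b} d"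
      if "delta_th b < \<delta>\<^sub>\<beta> \<and> \<delta>\<^sub>\<beta> < d"
      by (rule Gobj_unique_maximizer[OF assms(1,2,4,5,6) less_imp_le[OF conjunct1[OF that]]
            conjunct2[OF that] max])
  qed (rule max)
qed

end
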